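(* Let $G$ be a connected graph and let $uv$ be a cut edge of $G$ that is not pendent (i.e. $d_G(u)\ge 2$ and $d_G(v)\ge 2$). Let $G'$ be the graph obtained from $G$ by contracting the edge $uv$ onto the vertex $u$ (so $u$ becomes adjacent to all former neighbors of $u$ and of $v$ other than $u,v$) and then adding a new pendent vertex (named $v$) adjacent to $u$. Then $SO(G)<SO(G')$.
   Context: For a graph $G$, $d_G(w)$ denotes the degree of vertex $w$, and the Sombor index is $SO(G)=\sum_{ab\in E(G)}\sqrt{d_G(a)^2+d_G(b)^2}$. A cut edge is an edge whose deletion disconnects the graph; it is pendent if one of its end vertices has degree one. *)

theory Defs
  imports Complex_Main
begin

definition simple_graph :: "'a set \<Rightarrow> 'a set set \<Rightarrow> bool" where
  "simple_graph V E \<longleftrightarrow> finite V \<and>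
     (\<forall>e\<in>E. \<exists>a b. a \<noteq> b \<and> e = {a, b} \<and> a \<in> V \<and> b \<in> V)"

definition graph_connected :: "'a set \<Rightarrow> 'a set set \<Rightarrow> bool" where
  "graph_connected V E \<longleftrightarrow> V \<noteq> {} \<and>
     (\<forall>x\<in>V. \<forall>y\<in>V. (x, y) \<in> {(a, b). {a, b} \<in> E}\<^sup>*)"

definition cut_edge :: "'a set \<Rightarrow> 'a set set \<Rightarrow> 'a set \<Rightarrow> bool" where
  "cut_edge V E e \<longleftrightarrow> e \<in> E \<and> graph_connected V E \<and> \<not> graph_connected V (E - {e})"

definition degree :: "'a set set \<Rightarrow> 'a \<Rightarrow> nat" where
  "degree E w = card {e \<in> E. w \<in> e}"

definition sombor :: "'a set set \<Rightarrow> real" where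
  "sombor E = (\<Sum>e\<in>E. sqrt (\<Sum>w\<in>e. (real (degree E w))\<^sup>2))"

text \<open>Contract edge uv onto u, then attach new pendent vertex (named v) to u.
  The vertex set is unchanged.\<close>
definition contract_and_pend :: "'a set set \<Rightarrow> 'a \<Rightarrow> 'a \<Rightarrow> 'a set set" where
  "contract_and_pend E u v =
     {e \<in> E. u \<notin> e \<and> v \<notin> e}
     \<union> {{u, x} | x. x \<noteq> u \<and> x \<noteq> v \<and> ({u, x} \<in> E \<or> {v, x} \<in> E)}
     \<union> {{u, v}}"

end

theory Submission
  imports Defs
begin

text \<open>Let \<open>A\<close>, \<open>B\<close> be the neighbours of \<open>u\<close>, resp. \<open>v\<close>, other than \<open>u, v\<close>, and \<open>R\<close>
  the edges avoiding both. As \<open>uv\<close> is a cut edge, \<open>A\<close> and \<open>B\<close> are disjoint, so with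
  \<open>a = |A|\<close>, \<open>b = |B|\<close> the degrees of \<open>u, v\<close> are \<open>a + 1, b + 1\<close> before and
  \<open>a + b + 1, 1\<close> after the operation, all other degrees being unchanged. Edge by edge the
  Sombor terms can only grow: strictly at the edges \<open>ux\<close>, \<open>x \<in> A\<close>, since \<open>b \<ge> 1\<close>;
  and for \<open>uv\<close> itself \<open>(a + 1)\<^sup>2 + (b + 1)\<^sup>2 \<le> (a + b + 1)\<^sup>2 + 1\<close> as \<open>a, b \<ge> 1\<close>.\<close>

definition spokes :: "'a \<Rightarrow> 'a set \<Rightarrow> 'a set set" where
  "spokes w S = (\<lambda>x. {w, x}) ` S"

definition edge_weight :: "'a set set \<Rightarrow> 'a set \<Rightarrow> real" where
  "edge_weight E e = sqrt (\<Sum>w\<in>e. (real (degree E w))\<^sup>2)"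

lemma sombor_eq_sum_edge_weight: "sombor E = sum (edge_weight E) E"
  by (simp add: sombor_def edge_weight_def)

lemma edge_weight_doubleton:
  "a \<noteq> b \<Longrightarrow> edge_weight E {a, b} = sqrt ((real (degree E a))\<^sup>2 + (real (degree E b))\<^sup>2)"
  by (simp add: edge_weight_def)

lemma inj_on_doubleton: "w \<notin> S \<Longrightarrow> inj_on (\<lambda>x. {w, x}) S"
  by (auto simp: inj_on_def doubleton_eq_iff)

lemma card_spokes: "w \<notin> S \<Longrightarrow> card (spokes w S) = card S"
  by (simp add: spokes_def card_image inj_on_doubleton)

lemma finite_spokes: "finite S \<Longrightarrow> finite (spokes w S)"
  by (simp add: spokes_def)

lemma sum_spokes: "w \<notin> S \<Longrightarrow> sum f (spokes w S) = (\<Sum>x\<in>S. f {w, x})"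
  by (simp add: spokes_def sum.reindex inj_on_doubleton)

lemma simple_graph_finite_edges:
  assumes "simple_graph V E"
  shows "finite E"
proof -
  have "E \<subseteq> Pow V" "finite V" using assms unfolding simple_graph_def by fastforce+
  then show ?thesis by (meson finite_Pow_iff finite_subset)
qed

lemma simple_graph_edge_at:
  assumes "simple_graph V E" "e \<in> E" "w \<in> e"
  obtains x where "x \<noteq> w" "e = {w, x}"
  using assms unfolding simple_graph_def by fastforce

lemma simple_graph_finite_neighbours:
  assumes "simple_graph V E"
  shows "finite {x. {w, x} \<in> E}"
proof -
  have "{x. {w, x} \<in> E} \<subseteq> V" "finite V"
    using assms unfolding simple_graph_def by (fastforce simp: doubleton_eq_iff)+
  then show ?thesis by (rule finite_subset)
qed

text \<open>A triangle through \<open>uv\<close> would reconnect \<open>u\<close> and \<open>v\<close> after deleting \<open>uv\<close>.\<close>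
lemma cut_edge_not_in_triangle:
  assumes "cut_edge V E {u, v}" "{u, w} \<in> E" "{v, w} \<in> E" "w \<noteq> u" "w \<noteq> v"
  shows False
proof -
  define S where "S = {(a, b). {a, b} \<in> E}"
  define S' where "S' = {(a, b). {a, b} \<in> E - {{u, v}}}"
  have "(u, w) \<in> S'" "(w, v) \<in> S'" "(v, w) \<in> S'" "(w, u) \<in> S'"
    using assms(2-5) unfolding S'_def by (auto simp: doubleton_eq_iff insert_commute)
  then have "(u, v) \<in> S'\<^sup>*" "(v, u) \<in> S'\<^sup>*" by (meson rtrancl.simps)+
  then have "S \<subseteq> S'\<^sup>*"
    unfolding S_def S'_def by (auto simp: doubleton_eq_iff)
  then have "S\<^sup>* \<subseteq> S'\<^sup>*" by (metis rtrancl_subset_rtrancl)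
  then have "graph_connected V (E - {{u, v}})"
    using assms(1) unfolding cut_edge_def graph_connected_def S_def S'_def by blast
  with assms(1) show False by (simp add: cut_edge_def)
qed

locale nonpendent_cut_edge =
  fixes V :: "'a set" and E :: "'a set set" and u v :: 'a
  assumes simple: "simple_graph V E"
    and cut: "cut_edge V E {u, v}"
    and distinct: "u \<noteq> v"
    and degree_u_ge: "degree E u \<ge> 2"
    and degree_v_ge: "degree E v \<ge> 2"
begin

abbreviation E' where "E' \<equiv> contract_and_pend E u v"

definition A where "A = {x. x \<noteq> u \<and> x \<noteq> v \<and> {u, x} \<in> E}"
definition B where "B = {x. x \<noteq> u \<and> x \<noteq> v \<and> {v, x} \<in> E}"
definition R where "R = {e \<in> E. u \<notin> e \<and> v \<notin> e}"

lemma uv_edge: "{u, v} \<in> E"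
  using cut by (simp add: cut_edge_def)

lemma finite_parts: "finite A" "finite B" "finite R"
  using simple_graph_finite_neighbours[OF simple] simple_graph_finite_edges[OF simple]
  unfolding A_def B_def R_def by (auto intro: rev_finite_subset)

lemma not_in_A_B: "u \<notin> A" "v \<notin> A" "u \<notin> B" "v \<notin> B"
  by (auto simp: A_def B_def)

lemma in_A_B_neq: "x \<in> A \<Longrightarrow> x \<noteq> u \<and> x \<noteq> v" "x \<in> B \<Longrightarrow> x \<noteq> u \<and> x \<noteq> v"
  by (auto simp: A_def B_def)

lemma A_B_disjoint: "A \<inter> B = {}"
  using cut_edge_not_in_triangle[OF cut] by (auto simp: A_def B_def)

lemma edges_decomp: "E = R \<union> spokes u A \<union> spokes v B \<union> {{u, v}}"
proof
  show "E \<subseteq> R \<union> spokes u A \<union> spokes v B \<union> {{u, v}}"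
  proof
    fix e assume e: "e \<in> E"
    consider "u \<in> e" | "u \<notin> e" "v \<in> e" | "u \<notin> e" "v \<notin> e" by blast
    then show "e \<in> R \<union> spokes u A \<union> spokes v B \<union> {{u, v}}"
    proof cases
      case 1
      with e obtain x where "x \<noteq> u" "e = {u, x}" by (metis simple simple_graph_edge_at)
      then show ?thesis using e by (cases "x = v") (auto simp: A_def spokes_def)
    next
      case 2
      with e obtain x where "x \<noteq> v" "e = {v, x}" by (metis simple simple_graph_edge_at)
      then show ?thesis using e 2 by (auto simp: B_def spokes_def)
    qed (use e in \<open>auto simp: R_def\<close>)
  qed
  show "R \<union> spokes u A \<union> spokes v B \<union> {{u, v}} \<subseteq> E"
    using uv_edge by (auto simp: R_def A_def B_def spokes_def)
qed

lemma contracted_decomp: "E' = R \<union> spokes u (A \<union> B) \<union> {{u, v}}"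
  unfolding contract_and_pend_def R_def A_def B_def spokes_def by blast

lemma degree_u: "degree E u = card A + 1"
proof -
  have "{e \<in> E. u \<in> e} = insert {u, v} (spokes u A)"
    using distinct by (subst edges_decomp) (auto simp: R_def B_def spokes_def)
  moreover have "{u, v} \<notin> spokes u A"
    using not_in_A_B by (auto simp: spokes_def doubleton_eq_iff)
  ultimately show ?thesis
    using finite_parts not_in_A_B by (simp add: degree_def card_spokes finite_spokes)
qed

lemma degree_v: "degree E v = card B + 1"
proof -
  have "{e \<in> E. v \<in> e} = insert {v, u} (spokes v B)"
    using distinct by (subst edges_decomp) (auto simp: R_def A_def spokes_def insert_commute)
  moreover have "{v, u} \<notin> spokes v B"
    using not_in_A_B by (auto simp: spokes_def doubleton_eq_iff)
  ultimately show ?thesis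
    using finite_parts not_in_A_B by (simp add: degree_def card_spokes finite_spokes)
qed

lemma degree_contracted_u: "degree E' u = card A + card B + 1"
proof -
  have "{e \<in> E'. u \<in> e} = insert {u, v} (spokes u (A \<union> B))"
    by (subst contracted_decomp) (auto simp: R_def spokes_def)
  moreover have "{u, v} \<notin> spokes u (A \<union> B)"
    using not_in_A_B by (auto simp: spokes_def doubleton_eq_iff)
  ultimately show ?thesis
    using finite_parts not_in_A_B A_B_disjoint
    by (simp add: degree_def card_spokes finite_spokes card_Un_disjoint)
qed

lemma degree_contracted_v: "degree E' v = 1"
proof -
  have "{e \<in> E'. v \<in> e} = {{u, v}}"
    using distinct by (subst contracted_decomp) (auto simp: R_def A_def B_def spokes_def)
  then show ?thesis by (simp add: degree_def)
qed

lemma degree_contracted_other: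
  assumes "x \<noteq> u" "x \<noteq> v"
  shows "degree E' x = degree E x"
proof -
  define Rx where "Rx = {e \<in> R. x \<in> e}"
  have at_x: "{e \<in> spokes w S. x \<in> e} = spokes w (S \<inter> {x})" if "w \<noteq> x" for w S
    using that by (auto simp: spokes_def)
  have "{e \<in> E. x \<in> e} = Rx \<union> {e \<in> spokes u A. x \<in> e} \<union> {e \<in> spokes v B. x \<in> e}"
    using assms by (subst edges_decomp) (auto simp: Rx_def)
  then have E_at_x: "{e \<in> E. x \<in> e} = Rx \<union> spokes u (A \<inter> {x}) \<union> spokes v (B \<inter> {x})"
    using at_x assms by simp
  have E'_at_x: "{e \<in> E'. x \<in> e} = Rx \<union> spokes u (A \<inter> {x}) \<union> spokes u (B \<inter> {x})"
    using assms by (subst contracted_decomp) (auto simp: Rx_def spokes_def)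
  have "finite Rx" using finite_parts by (simp add: Rx_def)
  moreover have "Rx \<inter> spokes u (A \<inter> {x}) = {}"
    "(Rx \<union> spokes u (A \<inter> {x})) \<inter> spokes w (B \<inter> {x}) = {}" "w \<notin> B \<inter> {x}"
    if "w \<in> {u, v}" for w
    using that A_B_disjoint not_in_A_B by (auto simp: Rx_def R_def spokes_def doubleton_eq_iff)
  ultimately have "card (Rx \<union> spokes u (A \<inter> {x}) \<union> spokes w (B \<inter> {x}))
      = card Rx + card (A \<inter> {x}) + card (B \<inter> {x})" if "w \<in> {u, v}" for w
    using that not_in_A_B finite_parts
    by (simp add: card_Un_disjoint finite_spokes card_spokes
        del: Un_insert_right Int_insert_right)
  then show ?thesis
    unfolding degree_def E_at_x E'_at_x by simp
qed

lemma sombor_decomp: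
  "sombor E = sum (edge_weight E) R
     + (\<Sum>x\<in>A. sqrt ((real (card A) + 1)\<^sup>2 + (real (degree E x))\<^sup>2))
     + (\<Sum>x\<in>B. sqrt ((real (card B) + 1)\<^sup>2 + (real (degree E x))\<^sup>2))
     + sqrt ((real (card A) + 1)\<^sup>2 + (real (card B) + 1)\<^sup>2)"
proof -
  have "R \<inter> spokes u A = {}" "(R \<union> spokes u A) \<inter> spokes v B = {}"
    "(R \<union> spokes u A \<union> spokes v B) \<inter> {{u, v}} = {}"
    using not_in_A_B distinct by (auto simp: R_def spokes_def doubleton_eq_iff)
  then have "sum (edge_weight E) E = sum (edge_weight E) R + sum (edge_weight E) (spokes u A)
      + sum (edge_weight E) (spokes v B) + edge_weight E {u, v}"
    using finite_parts by (subst (2) edges_decomp) (simp add: sum.union_disjoint finite_spokes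
        del: Un_insert_right)
  moreover have "sum (edge_weight E) (spokes u A)
      = (\<Sum>x\<in>A. sqrt ((real (card A) + 1)\<^sup>2 + (real (degree E x))\<^sup>2))"
    using not_in_A_B
    by (auto simp: sum_spokes edge_weight_doubleton degree_u dest: in_A_B_neq intro!: sum.cong)
  moreover have "sum (edge_weight E) (spokes v B)
      = (\<Sum>x\<in>B. sqrt ((real (card B) + 1)\<^sup>2 + (real (degree E x))\<^sup>2))"
    using not_in_A_B
    by (auto simp: sum_spokes edge_weight_doubleton degree_v dest: in_A_B_neq intro!: sum.cong)
  ultimately show ?thesis
    using distinct
    by (simp add: sombor_eq_sum_edge_weight edge_weight_doubleton degree_u degree_v add.commute)
qed

lemma sombor_contracted_decomp:
  "sombor E' = sum (edge_weight E) R
     + (\<Sum>x\<in>A \<union> B. sqrt ((real (card A + card B) + 1)\<^sup>2 + (real (degree E x))\<^sup>2))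
     + sqrt ((real (card A + card B) + 1)\<^sup>2 + 1)"
proof -
  have "R \<inter> spokes u (A \<union> B) = {}" "(R \<union> spokes u (A \<union> B)) \<inter> {{u, v}} = {}"
    using not_in_A_B by (auto simp: R_def spokes_def doubleton_eq_iff)
  then have "sum (edge_weight E') E' = sum (edge_weight E') R
      + sum (edge_weight E') (spokes u (A \<union> B)) + edge_weight E' {u, v}"
    using finite_parts by (subst (2) contracted_decomp) (simp add: sum.union_disjoint finite_spokes
        del: Un_insert_right)
  moreover have "sum (edge_weight E') R = sum (edge_weight E) R"
    using degree_contracted_other by (fastforce simp: edge_weight_def R_def intro!: sum.cong)
  moreover have "sum (edge_weight E') (spokes u (A \<union> B))
      = (\<Sum>x\<in>A \<union> B. sqrt ((real (card A + card B) + 1)\<^sup>2 + (real (degree E x))\<^sup>2))"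
    using not_in_A_B
    by (auto simp: sum_spokes edge_weight_doubleton degree_contracted_u degree_contracted_other
        dest: in_A_B_neq intro!: sum.cong)
  ultimately show ?thesis
    using distinct
    by (simp add: sombor_eq_sum_edge_weight edge_weight_doubleton degree_contracted_u
        degree_contracted_v add.commute)
qed

lemma sombor_less_contracted: "sombor E < sombor E'"
proof -
  define a where "a = real (card A)"
  define b where "b = real (card B)"
  have "a \<ge> 1" "b \<ge> 1"
    using degree_u_ge degree_v_ge by (simp_all add: a_def b_def degree_u degree_v)
  then have "A \<noteq> {}" by (auto simp: a_def)
  let ?w = "\<lambda>s x. sqrt (s\<^sup>2 + (real (degree E x))\<^sup>2)"
  have "(\<Sum>x\<in>A. ?w (a + 1) x) < (\<Sum>x\<in>A. ?w (a + b + 1) x)"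
    using \<open>A \<noteq> {}\<close> finite_parts \<open>a \<ge> 1\<close> \<open>b \<ge> 1\<close>
    by (intro sum_strict_mono) (auto intro: power_strict_mono)
  moreover have "(\<Sum>x\<in>B. ?w (b + 1) x) \<le> (\<Sum>x\<in>B. ?w (a + b + 1) x)"
    using \<open>a \<ge> 1\<close> \<open>b \<ge> 1\<close> by (intro sum_mono) (auto intro: power_mono)
  moreover have "(a + 1)\<^sup>2 + (b + 1)\<^sup>2 \<le> (a + b + 1)\<^sup>2 + 1"
    using \<open>a \<ge> 1\<close> \<open>b \<ge> 1\<close> by (simp add: power2_eq_square algebra_simps)
  then have "sqrt ((a + 1)\<^sup>2 + (b + 1)\<^sup>2) \<le> sqrt ((a + b + 1)\<^sup>2 + 1)" by simp
  moreover have "sombor E = sum (edge_weight E) R + (\<Sum>x\<in>A. ?w (a + 1) x)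
      + (\<Sum>x\<in>B. ?w (b + 1) x) + sqrt ((a + 1)\<^sup>2 + (b + 1)\<^sup>2)"
    by (simp add: sombor_decomp a_def b_def)
  moreover have "sombor E' = sum (edge_weight E) R + (\<Sum>x\<in>A. ?w (a + b + 1) x)
      + (\<Sum>x\<in>B. ?w (a + b + 1) x) + sqrt ((a + b + 1)\<^sup>2 + 1)"
    using finite_parts A_B_disjoint
    by (simp add: sombor_contracted_decomp sum.union_disjoint a_def b_def)
  ultimately show ?thesis by linarith
qed

end

theorem lemma3p1:
  fixes V :: "'a set" and E :: "'a set set" and u v :: 'a
  assumes "simple_graph V E"
    and "graph_connected V E"
    and "u \<noteq> v"
    and "{u, v} \<in> E"
    and "cut_edge V E {u, v}"
    and "degree E u \<ge> 2"
    and "degree E v \<ge> 2"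
  shows "sombor E < sombor (contract_and_pend E u v)"
proof -
  \<comment> \<open>connectedness and \<open>{u, v} \<in> E\<close> are already part of \<open>cut_edge\<close>\<close>
  interpret nonpendent_cut_edge V E u v
    using assms by unfold_locales
  show ?thesis by (rule sombor_less_contracted)
qed

end
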